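(* Let $\Delta$ be a simplicial polytopal fan in $\mathbb{R}^d$ with ray generators $\mathbf{v}_1,\ldots,\mathbf{v}_n$, let $\{(\mathbf{u}^{(i)},y^{(i)})\}_{i=1}^m\subset\mathbb{R}^d\times\mathbb{R}$ be a data set, $U=(\mathbf{u}^{(1)},\ldots,\mathbf{u}^{(m)})^\mathsf{T}$ and $\mathbf{y}=(y^{(1)},\ldots,y^{(m)})^\mathsf{T}$. Then \[ \hat{P}^\Delta(U,\mathbf{y})=\operatorname{argmin}_{P(\mathbf{h})\in\mathcal{P}(\Delta)}\|A_U\mathbf{h}-\mathbf{y}\|. \] Equivalently, \[ \hat{P}^\Delta(U,\mathbf{y})=\mathcal{P}(\Delta)\cap\{\mathbf{h}\in\mathbb{R}^n\colon A_U\mathbf{h}=\hat{\mathbf{y}}\}, \] where $\hat{\mathbf{y}}\in A_U\mathcal{P}(\Delta)$ is the unique point of $A_U\mathcal{P}(\Delta)$ of minimal distance to $\mathbf{y}$. In particular, the solution set $\hat{P}^\Delta(U,\mathbf{y})$ is a non-empty polyhedron in $\mathbb{R}^n$.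
   Context: A fan is simplicial if every cone is generated by linearly independent vectors; it is polytopal if it is the normal fan of a polytope (so its support is $\mathbb{R}^d$). The support function of a convex body $P$ is $h_P(\mathbf{u})=\max_{\mathbf{x}\in P}\langle\mathbf{x},\mathbf{u}\rangle$. For $\mathbf{h}\in\mathbb{R}^n$ let $P(\mathbf{h})=\{\mathbf{x}\in\mathbb{R}^d\colon\langle\mathbf{x},\mathbf{v}_i\rangle\le h_i,\ i=1,\ldots,n\}$. The deformation cone $\mathcal{P}(\Delta)$ is the set of all polytopes whose normal fan is a coarsening of $\Delta$ (every cone of their normal fan is a union of cones of $\Delta$); such a polytope $P$ equals $P(\mathbf{h})$ for its support vector $\mathbf{h}=(h_P(\mathbf{v}_1),\ldots,h_P(\mathbf{v}_n))$, and via $P(\mathbf{h})\mapsto\mathbf{h}$ the set $\mathcal{P}(\Delta)$ is identified with a closed full-dimensional polyhedral cone in $\mathbb{R}^n$. For $\mathbf{u}\in\mathbb{R}^d$ let $\sigma$ be the unique cone of $\Delta$ with $\mathbf{u}$ in its relative interior, $I_\sigma$ the index set of its generators, and write $\mathbf{u}=\sum_{k\in I_\sigma}\lambda_k\mathbf{v}_k$; define $[\mathbf{u}]\in\mathbb{R}^n$ by $[\mathbf{u}]_i=\lambda_i$ for $i\in I_\sigma$ and $0$ otherwise. $A_U\in\mathbb{R}^{m\times n}$ is the matrix with rows $[\mathbf{u}^{(1)}]^\mathsf{T},\ldots,[\mathbf{u}^{(m)}]^\mathsf{T}$. The least-squares estimator is $\hat{P}^\Delta(U,\mathbf{y})=\operatorname{argmin}_{P\in\mathcal{P}(\Delta)}\frac1m\sum_{i=1}^m(h_P(\mathbf{u}^{(i)})-y^{(i)})^2$,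 regarded as a set of support vectors in $\mathbb{R}^n$. *)

theory Defs
  imports "HOL-Analysis.Analysis"
begin

text \<open>Ray generators are v :: 'n => real^'d (index type 'n, so n = CARD('n)).
  A simplicial fan is given by its set of cones, each cone described by the index set
  of its generators.\<close>

definition cone_of :: "('n \<Rightarrow> real^'d) \<Rightarrow> 'n set \<Rightarrow> (real^'d) set" where
  "cone_of v S = {x. \<exists>c. (\<forall>i\<in>S. 0 \<le> c i) \<and> x = (\<Sum>i\<in>S. c i *\<^sub>R v i)}"

definition simplicial_fan :: "'n set set \<Rightarrow> ('n::finite \<Rightarrow> real^'d) \<Rightarrow> bool" where
  "simplicial_fan \<Delta> v \<longleftrightarrow>
     (\<forall>S\<in>\<Delta>. inj_on v S \<and> independent (v ` S)) \<and>
     (\<forall>S\<in>\<Delta>. \<forall>T. T \<subseteq> S \<longrightarrow> T \<in> \<Delta>) \<and>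
     (\<forall>S\<in>\<Delta>. \<forall>T\<in>\<Delta>. cone_of v S \<inter> cone_of v T = cone_of v (S \<inter> T)) \<and>
     (\<forall>i. {i} \<in> \<Delta>)"

definition normal_cone :: "(real^'d) set \<Rightarrow> (real^'d) set \<Rightarrow> (real^'d) set" where
  "normal_cone P F = {u. \<forall>x\<in>F. \<forall>z\<in>P. z \<bullet> u \<le> x \<bullet> u}"

definition normal_fan :: "(real^'d) set \<Rightarrow> (real^'d) set set" where
  "normal_fan P = {normal_cone P F | F. F face_of P \<and> F \<noteq> {}}"

definition polytopal_fan :: "'n set set \<Rightarrow> ('n::finite \<Rightarrow> real^'d) \<Rightarrow> bool" where
  "polytopal_fan \<Delta> v \<longleftrightarrow>
     (\<exists>P. polytope P \<and> {cone_of v S | S. S \<in> \<Delta>} = normal_fan P)"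

definition support_fun :: "(real^'d) set \<Rightarrow> real^'d \<Rightarrow> real" where
  "support_fun P u = Sup ((\<lambda>x. x \<bullet> u) ` P)"

definition P_of :: "('n::finite \<Rightarrow> real^'d) \<Rightarrow> real^'n \<Rightarrow> (real^'d) set" where
  "P_of v h = {x. \<forall>i. x \<bullet> v i \<le> h $ i}"

definition coarsens :: "(real^'d) set \<Rightarrow> 'n set set \<Rightarrow> ('n \<Rightarrow> real^'d) \<Rightarrow> bool" where
  "coarsens Q \<Delta> v \<longleftrightarrow>
     (\<forall>C\<in>normal_fan Q. \<exists>T\<subseteq>\<Delta>. C = (\<Union>S\<in>T. cone_of v S))"

definition def_cone :: "'n set set \<Rightarrow> ('n::finite \<Rightarrow> real^'d) \<Rightarrow> (real^'n) set" where
  "def_cone \<Delta> v = {h. \<exists>Q. polytope Q \<and> Q \<noteq> {} \<and> coarsens Q \<Delta> v \<and>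
                          h = (\<chi> i. support_fun Q (v i))}"

definition coord_vec :: "'n set set \<Rightarrow> ('n::finite \<Rightarrow> real^'d) \<Rightarrow> real^'d \<Rightarrow> real^'n" where
  "coord_vec \<Delta> v u = (THE c. \<exists>S\<in>\<Delta>. u \<in> rel_interior (cone_of v S) \<and>
                          (\<forall>i. i \<notin> S \<longrightarrow> c $ i = 0) \<and> u = (\<Sum>i\<in>S. c $ i *\<^sub>R v i))"

definition A_mat :: "'n set set \<Rightarrow> ('n::finite \<Rightarrow> real^'d) \<Rightarrow> ('m::finite \<Rightarrow> real^'d) \<Rightarrow> real^'n^'m" where
  "A_mat \<Delta> v U = (\<chi> k. coord_vec \<Delta> v (U k))"

definition ls_objective :: "('n::finite \<Rightarrow> real^'d) \<Rightarrow> ('m::finite \<Rightarrow> real^'d) \<Rightarrow> real^'m \<Rightarrow> real^'n \<Rightarrow> real" where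
  "ls_objective v U y h =
     (1 / real CARD('m)) * (\<Sum>k\<in>UNIV. (support_fun (P_of v h) (U k) - y $ k)\<^sup>2)"

definition LSE :: "'n set set \<Rightarrow> ('n::finite \<Rightarrow> real^'d) \<Rightarrow> ('m::finite \<Rightarrow> real^'d) \<Rightarrow> real^'m \<Rightarrow> (real^'n) set" where
  "LSE \<Delta> v U y = {h \<in> def_cone \<Delta> v.
      \<forall>h' \<in> def_cone \<Delta> v. ls_objective v U y h \<le> ls_objective v U y h'}"

end

theory Submission
  imports Defs
begin

(* On a complete simplicial fan every u is a positive combination sum lambda_i v_i over exactly
   one cone S of Delta, the one containing u in its relative interior, and [u] records these
   lambda_i.  A vector h is the support vector of a polytope whose normal fan coarsens Delta iff
   for every S in Delta some point x of P(h) makes the inequalities <x, v_i> <= h_i, i in S, all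
   tight.  Such an x maximises <., u> over P(h), so h_P(h)(u) = sum lambda_i h_i = <[u], h>, and on
   the deformation cone the least-squares objective is ||A_U h - y||^2 / m.  The same
   characterisation presents the deformation cone as a projection of a polyhedral cone, hence
   A_U P(Delta) is a closed convex polyhedral cone, which has a unique point nearest to y. *)

section \<open>Polyhedra and nearest points\<close>

lemma polyhedron_linear_le:
  fixes l :: "'a::euclidean_space \<Rightarrow> real"
  assumes "linear l"
  shows "polyhedron {x. l x \<le> b}"
  using polyhedron_halfspace_le[of "adjoint l 1" b] adjoint_works[OF assms, of _ 1]
  by (simp add: inner_commute)

lemma polyhedron_linear_eq:
  fixes f :: "'a::euclidean_space \<Rightarrow> 'b::euclidean_space"
  assumes "linear f"
  shows "polyhedron {x. f x = c}"
proof -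
  have "f x = c \<longleftrightarrow> (\<forall>b\<in>Basis. adjoint f b \<bullet> x = c \<bullet> b)" for x
    using adjoint_works[OF assms, of x] euclidean_eq_iff[of "f x" c] by (simp add: inner_commute)
  then have "{x. f x = c} = (\<Inter>b\<in>Basis. {x. adjoint f b \<bullet> x = c \<bullet> b})"
    by auto
  then show ?thesis
    by (auto intro!: polyhedron_Inter simp: polyhedron_hyperplane)
qed

lemma polyhedron_linear_image_conic:
  fixes f :: "'a::euclidean_space \<Rightarrow> 'b::euclidean_space"
  assumes K: "polyhedron K" "conic K" and f: "linear f"
  shows "polyhedron (f ` K)"
proof -
  define P where "P = K \<inter> cbox (- One) One"
  have "polytope P"
    unfolding P_def using K(1) by (simp add: polytope_eq_bounded_polyhedron bounded_Int)
  have "K \<subseteq> conic hull P"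
  proof
    fix x assume x: "x \<in> K"
    define t where "t = norm x + 1"
    have t: "t > 0" unfolding t_def by (simp add: add_nonneg_pos)
    have "(1 / t) *\<^sub>R x \<in> cbox (- One) One"
      unfolding mem_box
    proof
      fix i :: 'a assume "i \<in> Basis"
      then have "\<bar>x \<bullet> i\<bar> \<le> t - 1" using Basis_le_norm[of i x] by (simp add: t_def)
      then show "- One \<bullet> i \<le> (1 / t) *\<^sub>R x \<bullet> i \<and> (1 / t) *\<^sub>R x \<bullet> i \<le> One \<bullet> i"
        using t \<open>i \<in> Basis\<close> by (simp add: field_simps) linarith
    qed
    moreover have "(1 / t) *\<^sub>R x \<in> K" using conicD[OF K(2) x] t by simp
    ultimately have "(1 / t) *\<^sub>R x \<in> conic hull P"
      unfolding P_def by (simp add: hull_inc)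
    from conicD[OF conic_conic_hull this, of t] show "x \<in> conic hull P"
      using t by simp
  qed
  moreover have "conic hull P \<subseteq> K"
    unfolding P_def using K(2) by (intro hull_minimal) auto
  ultimately have "f ` K = conic hull (f ` P)"
    using conic_hull_linear_image[OF f] by simp
  then show ?thesis
    using \<open>polytope P\<close> f by (simp add: polyhedron_conic_hull_polytope polytope_linear_image)
qed

lemma bounded_if_inner_bdd_above:
  fixes X :: "'a::euclidean_space set"
  assumes "\<And>w. \<exists>M. \<forall>x\<in>X. x \<bullet> w \<le> M"
  shows "bounded X"
proof -
  obtain M where M: "\<And>w x. x \<in> X \<Longrightarrow> x \<bullet> w \<le> M w" using assms by metis
  have "norm x \<le> (\<Sum>b\<in>Basis. max (M b) (M (- b)))" if "x \<in> X" for x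
  proof -
    have "\<bar>x \<bullet> b\<bar> \<le> max (M b) (M (- b))" for b
      using M[OF that, of b] M[OF that, of "- b"] by (simp add: abs_le_iff max_def)
    then show ?thesis by (rule order_trans[OF norm_le_l1 sum_mono])
  qed
  then show ?thesis unfolding bounded_iff by blast
qed

lemma closest_point_iff:
  assumes "closed S" "convex S" "x \<in> S"
  shows "x = closest_point S a \<longleftrightarrow> (\<forall>z\<in>S. dist a x \<le> dist a z)"
  using closest_point_le[OF assms(1)] closest_point_unique[OF assms(2,1,3)] by blast

lemma argmin_norm_image_eq_closest_point:
  fixes f :: "'a \<Rightarrow> 'b::euclidean_space"
  assumes "closed (f ` K)" "convex (f ` K)"
  shows "{h \<in> K. \<forall>h' \<in> K. norm (f h - y) \<le> norm (f h' - y)} = {h \<in> K. f h = closest_point (f ` K) y}"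
proof -
  have "dist y (f h) = norm (f h - y)" for h by (simp add: dist_norm norm_minus_commute)
  then show ?thesis
    using closest_point_iff[OF assms, of _ y] by auto
qed

section \<open>Cones of a simplicial fan\<close>

lemma cone_ofI: "(\<And>i. i \<in> S \<Longrightarrow> 0 \<le> c i) \<Longrightarrow> (\<Sum>i\<in>S. c i *\<^sub>R v i) \<in> cone_of v S"
  unfolding cone_of_def by blast

lemma cone_ofE:
  assumes "x \<in> cone_of v S"
  obtains c where "\<And>i. i \<in> S \<Longrightarrow> 0 \<le> c i" "x = (\<Sum>i\<in>S. c i *\<^sub>R v i)"
  using assms unfolding cone_of_def by blast

lemma cone_of_subset_span: "cone_of v S \<subseteq> span (v ` S)"
proof
  fix x assume "x \<in> cone_of v S"
  then obtain c where "x = (\<Sum>i\<in>S. c i *\<^sub>R v i)" by (rule cone_ofE)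
  then show "x \<in> span (v ` S)" by (simp add: span_sum span_scale span_base)
qed

lemma generator_in_cone_of:
  assumes "j \<in> S" "finite S"
  shows "v j \<in> cone_of v S"
proof -
  have "(\<Sum>i\<in>S. (if i = j then 1 else 0) *\<^sub>R v i) = v j"
    using assms by (simp add: if_distrib[of "\<lambda>c. c *\<^sub>R _"] sum.delta' cong: if_cong)
  then show ?thesis using cone_ofI[of S "\<lambda>i. if i = j then 1 else 0" v] by simp
qed

lemma affine_hull_cone_of:
  assumes "finite S"
  shows "affine hull (cone_of v S) = span (v ` S)"
proof -
  have "0 \<in> cone_of v S" using cone_ofI[of S "\<lambda>_. 0" v] by simp
  then have "affine hull (cone_of v S) = span (cone_of v S)"
    by (simp add: affine_hull_span_0 hull_inc)
  also have "\<dots> = span (v ` S)"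
  proof (rule antisym)
    show "span (cone_of v S) \<subseteq> span (v ` S)"
      by (simp add: span_minimal cone_of_subset_span)
    show "span (v ` S) \<subseteq> span (cone_of v S)"
      using generator_in_cone_of[OF _ assms] by (intro span_mono) auto
  qed
  finally show ?thesis .
qed

lemma independent_coordinate_map:
  fixes v :: "'n::finite \<Rightarrow> 'a::euclidean_space"
  assumes inj: "inj_on v S" and ind: "independent (v ` S)"
  obtains g :: "'a \<Rightarrow> real^'n"
  where "linear g" "\<And>a j. j \<in> S \<Longrightarrow> g (\<Sum>i\<in>S. a i *\<^sub>R v i) $ j = a j"
proof -
  obtain g :: "'a \<Rightarrow> real^'n" where g: "linear g" "\<And>x. x \<in> v ` S \<Longrightarrow> g x = axis (the_inv_into S v x) 1"
    using linear_independent_extend[OF ind, of "\<lambda>x. axis (the_inv_into S v x) 1"] by blast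
  have "g (\<Sum>i\<in>S. a i *\<^sub>R v i) $ j = a j" if "j \<in> S" for a j
  proof -
    have "g (\<Sum>i\<in>S. a i *\<^sub>R v i) = (\<Sum>i\<in>S. a i *\<^sub>R axis i 1)"
      using g inj by (simp add: linear_sum linear_scale the_inv_into_f_f)
    then show ?thesis
      using that by (simp add: axis_def if_distrib[of "(*) _"] sum.delta cong: if_cong)
  qed
  with g(1) show ?thesis by (rule that)
qed

lemma independent_coeff_eq:
  fixes v :: "'n::finite \<Rightarrow> 'a::euclidean_space"
  assumes "inj_on v S" "independent (v ` S)"
    and "(\<Sum>i\<in>S. a i *\<^sub>R v i) = (\<Sum>i\<in>S. b i *\<^sub>R v i)" "j \<in> S"
  shows "a j = b j"
proof -
  obtain g :: "'a \<Rightarrow> real^'n"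
    where "linear g" and g: "\<And>a j. j \<in> S \<Longrightarrow> g (\<Sum>i\<in>S. a i *\<^sub>R v i) $ j = a j"
    using independent_coordinate_map[OF assms(1,2)] by metis
  from g[OF assms(4), of a] g[OF assms(4), of b] assms(3) show ?thesis by simp
qed

lemma rel_interior_cone_of_coeff_pos:
  fixes v :: "'n::finite \<Rightarrow> real^'d"
  assumes inj: "inj_on v S" and ind: "independent (v ` S)"
    and u: "u \<in> rel_interior (cone_of v S)"
    and c: "\<And>i. i \<in> S \<Longrightarrow> 0 \<le> c i" and uc: "u = (\<Sum>i\<in>S. c i *\<^sub>R v i)"
    and j: "j \<in> S"
  shows "0 < c j"
proof -
  obtain e where e: "e > 0" "ball u e \<inter> span (v ` S) \<subseteq> cone_of v S"
    using u unfolding mem_rel_interior_ball affine_hull_cone_of[OF finite] by blast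
  define t where "t = e / (norm (v j) + 1)"
  have n: "0 < norm (v j) + 1" by (simp add: add_nonneg_pos)
  have t: "0 < t" "t * norm (v j) < e"
    using e(1) n by (simp_all add: t_def field_simps)
  have "u - t *\<^sub>R v j \<in> ball u e"
    using t by (simp add: dist_norm)
  moreover have "u - t *\<^sub>R v j \<in> span (v ` S)"
    using uc j by (simp add: span_diff span_scale span_sum span_base)
  ultimately have "u - t *\<^sub>R v j \<in> cone_of v S" using e(2) by blast
  then obtain d where d: "\<And>i. i \<in> S \<Longrightarrow> 0 \<le> d i"
    and ud: "u - t *\<^sub>R v j = (\<Sum>i\<in>S. d i *\<^sub>R v i)"
    using cone_ofE by blast
  have "u - t *\<^sub>R v j = (\<Sum>i\<in>S. (c i - (if i = j then t else 0)) *\<^sub>R v i)"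
    using j by (simp add: uc scaleR_diff_left sum_subtractf if_distrib[of "\<lambda>c. c *\<^sub>R _"] cong: if_cong)
  with ud have "d j = c j - (if j = j then t else 0)"
    by (intro independent_coeff_eq[OF inj ind _ j]) simp
  then show ?thesis using d[OF j] t(1) by simp
qed

lemma positive_comb_in_rel_interior_cone_of:
  fixes v :: "'n::finite \<Rightarrow> real^'d"
  assumes inj: "inj_on v S" and ind: "independent (v ` S)" and c: "\<forall>i\<in>S. 0 < c i"
  shows "(\<Sum>i\<in>S. c i *\<^sub>R v i) \<in> rel_interior (cone_of v S)"
proof -
  obtain g :: "real^'d \<Rightarrow> real^'n"
    where g: "linear g" "\<And>a j. j \<in> S \<Longrightarrow> g (\<Sum>i\<in>S. a i *\<^sub>R v i) $ j = a j"
    using independent_coordinate_map[OF inj ind] by metis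
  define T where "T = (\<Inter>j\<in>S. {w. 0 < g w $ j})"
  have "continuous_on UNIV (\<lambda>w. g w $ j)" for j
    using g(1) by (intro linear_continuous_on bounded_linear_compose[OF bounded_linear_vec_nth])
      (simp add: linear_conv_bounded_linear)
  then have "open {w. 0 < g w $ j}" for j
    using open_Collect_less[OF continuous_on_const] by blast
  then have "open T"
    unfolding T_def by (simp add: open_INT)
  moreover have "(\<Sum>i\<in>S. c i *\<^sub>R v i) \<in> T" using c g(2) by (simp add: T_def)
  moreover have "T \<inter> span (v ` S) \<subseteq> cone_of v S"
  proof
    fix w assume w: "w \<in> T \<inter> span (v ` S)"
    then obtain a where "w = (\<Sum>x\<in>v ` S. a x *\<^sub>R x)"
      using span_finite[of "v ` S"] by auto
    then have wa: "w = (\<Sum>i\<in>S. a (v i) *\<^sub>R v i)"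
      using inj by (simp add: sum.reindex)
    have "0 \<le> a (v i)" if "i \<in> S" for i
      using w that g(2)[OF that, of "\<lambda>i. a (v i)"] unfolding T_def wa by force
    then show "w \<in> cone_of v S" unfolding wa by (rule cone_ofI)
  qed
  moreover have "(\<Sum>i\<in>S. c i *\<^sub>R v i) \<in> cone_of v S" using c by (simp add: cone_ofI less_imp_le)
  ultimately show ?thesis
    unfolding mem_rel_interior affine_hull_cone_of[OF finite] by blast
qed

lemma rel_interior_cone_of:
  fixes v :: "'n::finite \<Rightarrow> real^'d"
  assumes "inj_on v S" "independent (v ` S)"
  shows "rel_interior (cone_of v S) = {\<Sum>i\<in>S. c i *\<^sub>R v i | c. \<forall>i\<in>S. 0 < c i}"
proof (intro equalityI subsetI)
  fix u assume u: "u \<in> rel_interior (cone_of v S)"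
  then obtain c where "\<And>i. i \<in> S \<Longrightarrow> 0 \<le> c i" "u = (\<Sum>i\<in>S. c i *\<^sub>R v i)"
    using rel_interior_subset cone_ofE by blast
  with rel_interior_cone_of_coeff_pos[OF assms u] show "u \<in> {\<Sum>i\<in>S. c i *\<^sub>R v i | c. \<forall>i\<in>S. 0 < c i}"
    by blast
qed (use positive_comb_in_rel_interior_cone_of[OF assms] in blast)

lemma simplicial_fanD:
  assumes "simplicial_fan \<Delta> v"
  shows "S \<in> \<Delta> \<Longrightarrow> inj_on v S"
    and "S \<in> \<Delta> \<Longrightarrow> independent (v ` S)"
    and simplicial_fan_subset: "S \<in> \<Delta> \<Longrightarrow> T \<subseteq> S \<Longrightarrow> T \<in> \<Delta>"
    and simplicial_fan_Int: "S \<in> \<Delta> \<Longrightarrow> T \<in> \<Delta> \<Longrightarrow> cone_of v S \<inter> cone_of v T = cone_of v (S \<inter> T)"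
    and simplicial_fan_singleton: "{i} \<in> \<Delta>"
  using assms unfolding simplicial_fan_def by auto

lemma simplicial_fan_empty: "simplicial_fan \<Delta> v \<Longrightarrow> {} \<in> \<Delta>"
  using simplicial_fanD(3,5) by blast

lemma simplicial_fan_positive_comb_in_cone_of_subset:
  fixes v :: "'n::finite \<Rightarrow> real^'d"
  assumes sf: "simplicial_fan \<Delta> v" and S: "S \<in> \<Delta>" and T: "T \<in> \<Delta>"
    and c: "\<forall>i\<in>S. 0 < c i" and cT: "(\<Sum>i\<in>S. c i *\<^sub>R v i) \<in> cone_of v T"
  shows "S \<subseteq> T"
proof
  fix i assume i: "i \<in> S"
  have "(\<Sum>i\<in>S. c i *\<^sub>R v i) \<in> cone_of v (S \<inter> T)"
    using simplicial_fan_Int[OF sf S T] cT c by (auto intro: cone_ofI less_imp_le)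
  then obtain e where "(\<Sum>i\<in>S. c i *\<^sub>R v i) = (\<Sum>i\<in>S \<inter> T. e i *\<^sub>R v i)"
    using cone_ofE by blast
  also have "\<dots> = (\<Sum>i\<in>S. (if i \<in> T then e i else 0) *\<^sub>R v i)"
    by (simp add: sum.inter_restrict if_distrib[of "\<lambda>c. c *\<^sub>R _"] cong: if_cong)
  finally have "c i = (if i \<in> T then e i else 0)"
    by (rule independent_coeff_eq[OF simplicial_fanD(1,2)[OF sf S] _ i])
  then show "i \<in> T" using c i by (auto split: if_splits)
qed

lemma simplicial_fan_rel_interior_unique:
  fixes v :: "'n::finite \<Rightarrow> real^'d"
  assumes sf: "simplicial_fan \<Delta> v" and S: "S \<in> \<Delta>" and T: "T \<in> \<Delta>"
    and "u \<in> rel_interior (cone_of v S)" "u \<in> rel_interior (cone_of v T)"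
  shows "S = T"
proof -
  have "S \<subseteq> T" if S: "S \<in> \<Delta>" and T: "T \<in> \<Delta>"
    and u: "u \<in> rel_interior (cone_of v S)" "u \<in> rel_interior (cone_of v T)" for S T
  proof -
    obtain c where "\<forall>i\<in>S. 0 < c i" "u = (\<Sum>i\<in>S. c i *\<^sub>R v i)"
      using u(1) rel_interior_cone_of[OF simplicial_fanD(1,2)[OF sf S]] by blast
    then show ?thesis
      using simplicial_fan_positive_comb_in_cone_of_subset[OF sf S T] u(2) rel_interior_subset by blast
  qed
  then show ?thesis using assms by blast
qed

lemma normal_cone_face_exists:
  fixes P :: "(real^'d) set"
  assumes P: "polytope P" "P \<noteq> {}"
  obtains F where "F face_of P" "F \<noteq> {}" "u \<in> normal_cone P F"
proof -
  have "continuous_on P (\<lambda>z. z \<bullet> u)" by (intro continuous_intros)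
  then obtain s where s: "s \<in> P" "\<And>z. z \<in> P \<Longrightarrow> z \<bullet> u \<le> s \<bullet> u"
    using continuous_attains_sup[OF polytope_imp_compact[OF P(1)] P(2)] by blast
  define F where "F = P \<inter> {x. u \<bullet> x = u \<bullet> s}"
  have "F face_of P" unfolding F_def
    using face_of_Int_supporting_hyperplane_le[of P u "u \<bullet> s"] polytope_imp_convex[OF P(1)] s
    by (simp add: inner_commute)
  moreover have "F \<noteq> {}" using s unfolding F_def by blast
  moreover have "u \<in> normal_cone P F"
    unfolding normal_cone_def F_def using s by (auto simp: inner_commute)
  ultimately show ?thesis by (rule that)
qed

lemma polytopal_fan_positive_comb:
  fixes v :: "'n::finite \<Rightarrow> real^'d"
  assumes sf: "simplicial_fan \<Delta> v" and pf: "polytopal_fan \<Delta> v"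
  obtains S c where "S \<in> \<Delta>" "\<forall>i\<in>S. 0 < c i" "u = (\<Sum>i\<in>S. c i *\<^sub>R v i)"
proof -
  obtain P where P: "polytope P" "{cone_of v S |S. S \<in> \<Delta>} = normal_fan P"
    using pf unfolding polytopal_fan_def by blast
  have "cone_of v {undefined} \<in> normal_fan P"
    using P(2) simplicial_fan_singleton[OF sf] by blast
  then have "P \<noteq> {}"
    unfolding normal_fan_def using face_of_imp_subset by blast
  then obtain F where "F face_of P" "F \<noteq> {}" "u \<in> normal_cone P F"
    using normal_cone_face_exists[OF P(1)] by blast
  then obtain S where S: "S \<in> \<Delta>" "u \<in> cone_of v S"
    using P(2) unfolding normal_fan_def by blast
  then obtain c where c: "\<And>i. i \<in> S \<Longrightarrow> 0 \<le> c i" "u = (\<Sum>i\<in>S. c i *\<^sub>R v i)"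
    using cone_ofE by blast
  define S' where "S' = {i\<in>S. 0 < c i}"
  have "S' \<in> \<Delta>" using simplicial_fan_subset[OF sf S(1)] by (simp add: S'_def)
  moreover have "u = (\<Sum>i\<in>S'. c i *\<^sub>R v i)"
    unfolding c(2) S'_def using c(1) by (intro sum.mono_neutral_right) (auto simp: order.order_iff_strict)
  ultimately show ?thesis using that by (auto simp: S'_def)
qed

lemma coord_vec_eq:
  fixes v :: "'n::finite \<Rightarrow> real^'d"
  assumes sf: "simplicial_fan \<Delta> v" and S: "S \<in> \<Delta>" and c: "\<forall>i\<in>S. 0 < c i"
    and u: "u = (\<Sum>i\<in>S. c i *\<^sub>R v i)"
  shows "coord_vec \<Delta> v u = (\<chi> i. if i \<in> S then c i else 0)"
proof -
  have u_rel_interior: "u \<in> rel_interior (cone_of v S)"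
    using positive_comb_in_rel_interior_cone_of[OF simplicial_fanD(1,2)[OF sf S] c] u by simp
  show ?thesis
    unfolding coord_vec_def
  proof (rule the_equality)
    show "\<exists>S'\<in>\<Delta>. u \<in> rel_interior (cone_of v S') \<and>
        (\<forall>i. i \<notin> S' \<longrightarrow> (\<chi> i. if i \<in> S then c i else 0) $ i = 0) \<and>
        u = (\<Sum>i\<in>S'. (\<chi> i. if i \<in> S then c i else 0) $ i *\<^sub>R v i)"
      using S u u_rel_interior by (intro bexI[of _ S]) auto
  next
    fix c' :: "real^'n"
    assume "\<exists>S'\<in>\<Delta>. u \<in> rel_interior (cone_of v S') \<and> (\<forall>i. i \<notin> S' \<longrightarrow> c' $ i = 0) \<and>
        u = (\<Sum>i\<in>S'. c' $ i *\<^sub>R v i)"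
    then obtain S' where S': "S' \<in> \<Delta>" "u \<in> rel_interior (cone_of v S')"
      and c'0: "\<forall>i. i \<notin> S' \<longrightarrow> c' $ i = 0" and uc': "u = (\<Sum>i\<in>S'. c' $ i *\<^sub>R v i)"
      by blast
    have "S' = S" using simplicial_fan_rel_interior_unique[OF sf S'(1) S S'(2) u_rel_interior] .
    then have "(\<Sum>i\<in>S. c' $ i *\<^sub>R v i) = (\<Sum>i\<in>S. c i *\<^sub>R v i)"
      using uc' u by simp
    then have "c' $ i = c i" if "i \<in> S" for i
      using independent_coeff_eq[OF simplicial_fanD(1,2)[OF sf S] _ that] by blast
    then show "c' = (\<chi> i. if i \<in> S then c i else 0)"
      using c'0 \<open>S' = S\<close> by (auto simp: vec_eq_iff)
  qed
qed

section \<open>The deformation cone\<close>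

definition P_face :: "('n::finite \<Rightarrow> real^'d) \<Rightarrow> real^'n \<Rightarrow> 'n set \<Rightarrow> (real^'d) set" where
  "P_face v h S = {x \<in> P_of v h. \<forall>i\<in>S. x \<bullet> v i = h $ i}"

lemma P_face_maximizes_cone_of:
  assumes x: "x \<in> P_face v h S" and z: "z \<in> P_of v h" and w: "w \<in> cone_of v S"
  shows "z \<bullet> w \<le> x \<bullet> w"
proof -
  obtain c where c: "\<And>i. i \<in> S \<Longrightarrow> 0 \<le> c i" and wc: "w = (\<Sum>i\<in>S. c i *\<^sub>R v i)"
    using w cone_ofE by blast
  have "z \<bullet> w = (\<Sum>i\<in>S. c i * (z \<bullet> v i))" by (simp add: wc inner_sum_right)
  also have "\<dots> \<le> (\<Sum>i\<in>S. c i * (x \<bullet> v i))"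
    using x z c by (intro sum_mono mult_left_mono) (auto simp: P_face_def P_of_def)
  also have "\<dots> = x \<bullet> w" by (simp add: wc inner_sum_right)
  finally show ?thesis .
qed

lemma support_fun_eq_maximum:
  assumes "x \<in> Q" "\<And>z. z \<in> Q \<Longrightarrow> z \<bullet> u \<le> x \<bullet> u"
  shows "support_fun Q u = x \<bullet> u"
  unfolding support_fun_def using assms by (intro cSup_eq_maximum) auto

lemma inner_le_support_fun:
  assumes "compact Q" "x \<in> Q"
  shows "x \<bullet> u \<le> support_fun Q u"
proof -
  have "compact ((\<lambda>z. z \<bullet> u) ` Q)"
    using assms(1) by (intro compact_continuous_image continuous_intros)
  then show ?thesis
    unfolding support_fun_def using assms(2)
    by (intro cSup_upper) (auto intro: bounded_imp_bdd_above compact_imp_bounded)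
qed

lemma support_fun_P_of_cone_of:
  assumes "x \<in> P_face v h S" "w \<in> cone_of v S"
  shows "support_fun (P_of v h) w = x \<bullet> w"
  using assms P_face_maximizes_cone_of[OF assms(1) _ assms(2)]
  by (intro support_fun_eq_maximum) (auto simp: P_face_def)

lemma P_face_if_attains:
  assumes x: "x \<in> P_of v h" and c: "\<forall>i\<in>S. 0 < c i"
    and le: "(\<Sum>i\<in>S. c i * h $ i) \<le> x \<bullet> (\<Sum>i\<in>S. c i *\<^sub>R v i)"
  shows "x \<in> P_face v h S"
proof -
  have slack: "\<forall>i\<in>S. 0 \<le> c i * (h $ i - x \<bullet> v i)"
    using x c by (auto simp: P_of_def less_imp_le)
  have "(\<Sum>i\<in>S. c i * (h $ i - x \<bullet> v i)) \<le> 0"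
    using le by (simp add: inner_sum_right right_diff_distrib sum_subtractf)
  with slack have "(\<Sum>i\<in>S. c i * (h $ i - x \<bullet> v i)) = 0"
    by (meson antisym sum_nonneg)
  then have "\<forall>i\<in>S. c i * (h $ i - x \<bullet> v i) = 0"
    using slack by (simp add: sum_nonneg_eq_0_iff)
  then show ?thesis using x c unfolding P_face_def by force
qed

lemma def_cone_P_face_nonempty:
  fixes v :: "'n::finite \<Rightarrow> real^'d"
  assumes sf: "simplicial_fan \<Delta> v" and h: "h \<in> def_cone \<Delta> v" and S: "S \<in> \<Delta>"
  shows "P_face v h S \<noteq> {}"
proof -
  obtain Q where Q: "polytope Q" "Q \<noteq> {}" "coarsens Q \<Delta> v"
    and "h = (\<chi> i. support_fun Q (v i))"
    using h unfolding def_cone_def by blast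
  then have hQ: "\<And>i. h $ i = support_fun Q (v i)" by simp
  have QP: "Q \<subseteq> P_of v h"
    using inner_le_support_fun[OF polytope_imp_compact[OF Q(1)]] by (auto simp: P_of_def hQ)
  define u where "u = (\<Sum>i\<in>S. 1 *\<^sub>R v i)"
  obtain F where F: "F face_of Q" "F \<noteq> {}" "u \<in> normal_cone Q F"
    using normal_cone_face_exists[OF Q(1,2)] by blast
  have "normal_cone Q F \<in> normal_fan Q" unfolding normal_fan_def using F by blast
  then obtain \<T> where "\<T> \<subseteq> \<Delta>" "normal_cone Q F = (\<Union>T\<in>\<T>. cone_of v T)"
    using Q(3) unfolding coarsens_def by blast
  then obtain T where T: "T \<in> \<Delta>" "u \<in> cone_of v T" "cone_of v T \<subseteq> normal_cone Q F"
    using F(3) by blast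
  have "S \<subseteq> T"
    using simplicial_fan_positive_comb_in_cone_of_subset[OF sf S T(1), of "\<lambda>_. 1"] T(2)
    by (simp add: u_def)
  obtain x where x: "x \<in> F" using F(2) by blast
  have xQ: "x \<in> Q" using x F(1) face_of_imp_subset by blast
  have "x \<bullet> v i = h $ i" if "i \<in> S" for i
  proof -
    have "v i \<in> normal_cone Q F"
      using generator_in_cone_of[of i T v] \<open>S \<subseteq> T\<close> that T(3) by auto
    then show ?thesis
      using x xQ unfolding hQ normal_cone_def by (auto intro: support_fun_eq_maximum[symmetric])
  qed
  then show ?thesis using xQ QP unfolding P_face_def by blast
qed

lemma bounded_P_of:
  fixes v :: "'n::finite \<Rightarrow> real^'d"
  assumes sf: "simplicial_fan \<Delta> v" and pf: "polytopal_fan \<Delta> v"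
  shows "bounded (P_of v h)"
proof (rule bounded_if_inner_bdd_above)
  fix w :: "real^'d"
  obtain S c where c: "\<forall>i\<in>S. 0 < c i" and wc: "w = (\<Sum>i\<in>S. c i *\<^sub>R v i)"
    using polytopal_fan_positive_comb[OF sf pf] by metis
  have "x \<bullet> w \<le> (\<Sum>i\<in>S. c i * h $ i)" if "x \<in> P_of v h" for x
    unfolding wc inner_sum_right inner_scaleR_right
    using that c by (intro sum_mono mult_left_mono) (auto simp: P_of_def)
  then show "\<exists>M. \<forall>x\<in>P_of v h. x \<bullet> w \<le> M" by blast
qed

lemma polyhedron_P_of: "polyhedron (P_of v h)"
proof -
  have "P_of v h = (\<Inter>i. {x. v i \<bullet> x \<le> h $ i})"
    by (auto simp: P_of_def inner_commute)
  then show ?thesis by (auto intro!: polyhedron_Inter simp: polyhedron_halfspace_le)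
qed

lemma coarsens_P_of:
  fixes v :: "'n::finite \<Rightarrow> real^'d"
  assumes sf: "simplicial_fan \<Delta> v" and pf: "polytopal_fan \<Delta> v"
    and faces: "\<forall>S\<in>\<Delta>. P_face v h S \<noteq> {}"
  shows "coarsens (P_of v h) \<Delta> v"
  unfolding coarsens_def
proof
  fix N assume "N \<in> normal_fan (P_of v h)"
  then obtain F where F: "F face_of P_of v h" "N = normal_cone (P_of v h) F"
    unfolding normal_fan_def by blast
  have "u \<in> (\<Union>S\<in>{S\<in>\<Delta>. cone_of v S \<subseteq> N}. cone_of v S)" if u: "u \<in> N" for u
  proof -
    obtain S c where S: "S \<in> \<Delta>" and c: "\<forall>i\<in>S. 0 < c i" and uc: "u = (\<Sum>i\<in>S. c i *\<^sub>R v i)"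
      using polytopal_fan_positive_comb[OF sf pf] by metis
    obtain X where X: "X \<in> P_face v h S" using faces S by blast
    have "x \<in> P_face v h S" if x: "x \<in> F" for x
    proof (rule P_face_if_attains[OF _ c])
      show "x \<in> P_of v h" using x F(1) face_of_imp_subset by blast
      have "X \<bullet> u = (\<Sum>i\<in>S. c i * h $ i)"
        using X by (simp add: uc inner_sum_right P_face_def)
      moreover have "X \<bullet> u \<le> x \<bullet> u"
        using u x X unfolding F(2) normal_cone_def P_face_def by blast
      ultimately show "(\<Sum>i\<in>S. c i * h $ i) \<le> x \<bullet> (\<Sum>i\<in>S. c i *\<^sub>R v i)" by (simp add: uc)
    qed
    then have "cone_of v S \<subseteq> N"
      using P_face_maximizes_cone_of unfolding F(2) normal_cone_def by blast
    moreover have "u \<in> cone_of v S" using c by (simp add: uc cone_ofI less_imp_le)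
    ultimately show ?thesis using S by blast
  qed
  then have "N = (\<Union>S\<in>{S\<in>\<Delta>. cone_of v S \<subseteq> N}. cone_of v S)" by blast
  then show "\<exists>\<T>\<subseteq>\<Delta>. N = (\<Union>S\<in>\<T>. cone_of v S)"
    by (intro exI[of _ "{S\<in>\<Delta>. cone_of v S \<subseteq> N}"]) simp
qed

lemma def_cone_iff_P_face_nonempty:
  fixes v :: "'n::finite \<Rightarrow> real^'d"
  assumes sf: "simplicial_fan \<Delta> v" and pf: "polytopal_fan \<Delta> v"
  shows "h \<in> def_cone \<Delta> v \<longleftrightarrow> (\<forall>S\<in>\<Delta>. P_face v h S \<noteq> {})"
proof
  assume faces: "\<forall>S\<in>\<Delta>. P_face v h S \<noteq> {}"
  have "polytope (P_of v h)"
    using bounded_P_of[OF sf pf] polyhedron_P_of by (simp add: polytope_eq_bounded_polyhedron)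
  moreover have "P_of v h \<noteq> {}"
    using faces simplicial_fan_empty[OF sf] by (auto simp: P_face_def)
  moreover have "h $ i = support_fun (P_of v h) (v i)" for i
  proof -
    obtain x where x: "x \<in> P_face v h {i}" using faces simplicial_fan_singleton[OF sf] by blast
    then show ?thesis
      using support_fun_P_of_cone_of[OF x generator_in_cone_of[of i "{i}"]] by (simp add: P_face_def)
  qed
  ultimately show "h \<in> def_cone \<Delta> v"
    unfolding def_cone_def using coarsens_P_of[OF sf pf faces] by (auto simp: vec_eq_iff)
qed (use def_cone_P_face_nonempty[OF sf] in blast)

lemma support_fun_def_cone:
  fixes v :: "'n::finite \<Rightarrow> real^'d"
  assumes sf: "simplicial_fan \<Delta> v" and pf: "polytopal_fan \<Delta> v" and h: "h \<in> def_cone \<Delta> v"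
  shows "support_fun (P_of v h) u = coord_vec \<Delta> v u \<bullet> h"
proof -
  obtain S c where S: "S \<in> \<Delta>" and c: "\<forall>i\<in>S. 0 < c i" and uc: "u = (\<Sum>i\<in>S. c i *\<^sub>R v i)"
    using polytopal_fan_positive_comb[OF sf pf] by metis
  obtain x where x: "x \<in> P_face v h S" using def_cone_P_face_nonempty[OF sf h S] by blast
  have "support_fun (P_of v h) u = x \<bullet> u"
    using support_fun_P_of_cone_of[OF x] c by (simp add: uc cone_ofI less_imp_le)
  also have "\<dots> = (\<Sum>i\<in>S. c i * h $ i)"
    using x by (simp add: uc inner_sum_right P_face_def)
  also have "\<dots> = (\<chi> i. if i \<in> S then c i else 0) \<bullet> h"
    by (simp add: inner_vec_def if_distrib[of "\<lambda>c. c * _"] sum.If_cases cong: if_cong)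
  also have "\<dots> = coord_vec \<Delta> v u \<bullet> h"
    using coord_vec_eq[OF sf S c uc] by simp
  finally show ?thesis .
qed

lemma zero_mem_def_cone:
  fixes v :: "'n::finite \<Rightarrow> real^'d"
  assumes "simplicial_fan \<Delta> v" "polytopal_fan \<Delta> v"
  shows "0 \<in> def_cone \<Delta> v"
proof -
  have "0 \<in> P_face v 0 S" for S by (simp add: P_face_def P_of_def)
  then show ?thesis using def_cone_iff_P_face_nonempty[OF assms] by blast
qed

lemma polyhedron_linear_image_def_cone:
  fixes v :: "'n::finite \<Rightarrow> real^'d" and f :: "real^'n \<Rightarrow> 'b::euclidean_space"
  assumes sf: "simplicial_fan \<Delta> v" and pf: "polytopal_fan \<Delta> v" and f: "linear f"
  shows "polyhedron (f ` def_cone \<Delta> v)"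
proof -
  define C :: "((real^'n) \<times> ((real^'d)^('n set))) set"
    where "C = {p. \<forall>S\<in>\<Delta>. snd p $ S \<in> P_face v (fst p) S}"
  have "def_cone \<Delta> v = fst ` C"
  proof (intro equalityI subsetI)
    fix h assume "h \<in> def_cone \<Delta> v"
    then have "\<forall>S\<in>\<Delta>. \<exists>x. x \<in> P_face v h S"
      using def_cone_iff_P_face_nonempty[OF sf pf] by blast
    then obtain X where "\<forall>S\<in>\<Delta>. X S \<in> P_face v h S"
      by (metis bchoice)
    then have "(h, \<chi> S. X S) \<in> C" by (simp add: C_def)
    then show "h \<in> fst ` C" by force
  next
    fix h assume "h \<in> fst ` C"
    then show "h \<in> def_cone \<Delta> v"
      using def_cone_iff_P_face_nonempty[OF sf pf] by (force simp: C_def)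
  qed
  have lin: "linear (\<lambda>p :: (real^'n) \<times> ((real^'d)^('n set)). snd p $ S \<bullet> v i - fst p $ i)" for S i
    by (rule linearI) (simp_all add: inner_add_left algebra_simps)
  have "polyhedron {p. snd p $ S \<bullet> v i \<le> fst p $ i}"
    and "polyhedron {p. snd p $ S \<bullet> v i = fst p $ i}" for S :: "'n set" and i
    using polyhedron_linear_le[OF lin[of S i], of 0] polyhedron_linear_eq[OF lin[of S i], of 0]
    by simp_all
  moreover have "C = (\<Inter>S\<in>\<Delta>. \<Inter>i. {p. snd p $ S \<bullet> v i \<le> fst p $ i})
      \<inter> (\<Inter>S\<in>\<Delta>. \<Inter>i\<in>S. {p. snd p $ S \<bullet> v i = fst p $ i})"
    by (auto simp: C_def P_face_def P_of_def)
  ultimately have "polyhedron C"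
    by (auto intro!: polyhedron_Int polyhedron_Inter)
  moreover have "conic C"
    by (auto simp: conic_def C_def P_face_def P_of_def mult_left_mono)
  ultimately have "polyhedron ((f \<circ> fst) ` C)"
    using f by (intro polyhedron_linear_image_conic linear_compose[OF linear_fst])
  then show ?thesis by (simp add: \<open>def_cone \<Delta> v = fst ` C\<close> image_comp)
qed

section \<open>The least-squares estimator\<close>

lemma LSE_eq_argmin_norm:
  fixes v :: "'n::finite \<Rightarrow> real^'d" and U :: "'m::finite \<Rightarrow> real^'d"
  assumes sf: "simplicial_fan \<Delta> v" and pf: "polytopal_fan \<Delta> v"
  shows "LSE \<Delta> v U y = {h \<in> def_cone \<Delta> v. \<forall>h' \<in> def_cone \<Delta> v.
            norm (A_mat \<Delta> v U *v h - y) \<le> norm (A_mat \<Delta> v U *v h' - y)}"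
proof -
  have obj: "ls_objective v U y h = (norm (A_mat \<Delta> v U *v h - y))\<^sup>2 / real CARD('m)"
    if "h \<in> def_cone \<Delta> v" for h
  proof -
    have "support_fun (P_of v h) (U k) = (A_mat \<Delta> v U *v h) $ k" for k
      using support_fun_def_cone[OF sf pf that]
      by (simp add: A_mat_def matrix_vector_mult_def inner_vec_def)
    then show ?thesis
      unfolding ls_objective_def power2_norm_eq_inner
      by (simp add: inner_vec_def power2_eq_square)
  qed
  have "ls_objective v U y h \<le> ls_objective v U y h' \<longleftrightarrow>
      norm (A_mat \<Delta> v U *v h - y) \<le> norm (A_mat \<Delta> v U *v h' - y)"
    if "h \<in> def_cone \<Delta> v" "h' \<in> def_cone \<Delta> v" for h h'
    unfolding obj[OF that(1)] obj[OF that(2)] by (simp add: divide_le_cancel power_mono_iff)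
  then show ?thesis
    unfolding LSE_def by blast
qed

theorem theorem3p1:
  fixes \<Delta> :: "'n::finite set set" and v :: "'n \<Rightarrow> real^'d::finite"
    and U :: "'m::finite \<Rightarrow> real^'d" and y :: "real^'m"
  assumes "simplicial_fan \<Delta> v" and "polytopal_fan \<Delta> v"
  shows "LSE \<Delta> v U y = {h \<in> def_cone \<Delta> v. \<forall>h' \<in> def_cone \<Delta> v.
            norm (A_mat \<Delta> v U *v h - y) \<le> norm (A_mat \<Delta> v U *v h' - y)}
    \<and> (\<exists>!yh. yh \<in> (\<lambda>h. A_mat \<Delta> v U *v h) ` def_cone \<Delta> v \<and>
            (\<forall>z \<in> (\<lambda>h. A_mat \<Delta> v U *v h) ` def_cone \<Delta> v. dist y yh \<le> dist y z))
    \<and> (\<forall>yh. yh \<in> (\<lambda>h. A_mat \<Delta> v U *v h) ` def_cone \<Delta> v \<and>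
            (\<forall>z \<in> (\<lambda>h. A_mat \<Delta> v U *v h) ` def_cone \<Delta> v. dist y yh \<le> dist y z) \<longrightarrow>
            LSE \<Delta> v U y = def_cone \<Delta> v \<inter> {h. A_mat \<Delta> v U *v h = yh})
    \<and> LSE \<Delta> v U y \<noteq> {} \<and> polyhedron (LSE \<Delta> v U y)"
proof -
  let ?K = "def_cone \<Delta> v" and ?A = "\<lambda>h. A_mat \<Delta> v U *v h"
  have lin: "linear ?A" by (rule matrix_vector_mul_linear)
  have "polyhedron (?A ` ?K)" by (rule polyhedron_linear_image_def_cone[OF assms lin])
  then have closed: "closed (?A ` ?K)" and convex: "convex (?A ` ?K)"
    by (simp_all add: polyhedron_imp_closed polyhedron_imp_convex)
  have nonempty: "?A ` ?K \<noteq> {}" using zero_mem_def_cone[OF assms] by blast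
  define yh where "yh = closest_point (?A ` ?K) y"
  have nearest_iff: "yh' \<in> ?A ` ?K \<and> (\<forall>z \<in> ?A ` ?K. dist y yh' \<le> dist y z) \<longleftrightarrow> yh' = yh" for yh'
    using closest_point_iff[OF closed convex] closest_point_in_set[OF closed nonempty]
    unfolding yh_def by blast
  have LSE: "LSE \<Delta> v U y = ?K \<inter> {h. ?A h = yh}"
    using LSE_eq_argmin_norm[OF assms] argmin_norm_image_eq_closest_point[OF closed convex]
    by (auto simp: yh_def)
  have polyhedron: "polyhedron (LSE \<Delta> v U y)"
    unfolding LSE using polyhedron_linear_image_def_cone[OF assms linear_id] polyhedron_linear_eq[OF lin]
    by simp
  have "yh \<in> ?A ` ?K"
    unfolding yh_def by (rule closest_point_in_set[OF closed nonempty])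
  then have nonempty_LSE: "LSE \<Delta> v U y \<noteq> {}" using LSE by auto
  show ?thesis
    unfolding nearest_iff
    by (intro conjI LSE_eq_argmin_norm[OF assms]) (use LSE polyhedron nonempty_LSE in auto)
qed

end
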